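(* For every set of names $\rho$, active context $\mathcal C[\cdot]$, name $a$, prefix $\alpha_a$ with subject $a$, and process $Q$: if $\rho\vdash\mathcal C[\alpha_a.Q]$ and $a\notin\rho$, then $\mathrm{auth}(\mathcal C[\cdot],a)$ holds (is $\mathit{true}$).
   Context: Let $\mathcal N$ be a countable set of names. Processes are generated by $P,Q ::= 0 \mid P\mid Q \mid (\nu a)P \mid (a)P \mid \alpha.P$, where $(\nu a)P$ is name restriction (binding $a$), $(a)P$ is the authorization scope ($a$ not bound), and prefixes are $\alpha ::= \overline{a}\langle b\rangle$ (output) $\mid a(x)$ (input, binding $x$) $\mid \overline{a}\langle\!\langle b\rangle\!\rangle$ (send authorization for $b$ on $a$) $\mid a\langle\!\langle b\rangle\!\rangle$ (receive authorization for $b$ on $a$; $b$ not bound). For a name $a$, $\alpha_a$ denotes any prefix of one of the forms $\overline{a}\langle b\rangle$, $a(x)$, $\overline{a}\langle\!\langle b\rangle\!\rangle$, $a\langle\!\langle b\rangle\!\rangle$. Active contexts: $\mathcal C[\cdot] ::= \cdot \mid P\mid\mathcal C[\cdot] \mid (\nu a)\mathcal C[\cdot] \mid (a)\mathcal C[\cdot]$, and $\mathcal C[R]$ is the result of filling the hole with $R$. The predicate $\mathrm{auth}(\mathcal C[\cdot],a)$ is defined by: $\mathit{false}$ if $\mathcal C[\cdot]=\cdot$; $\mathit{true}$ if $\mathcal C[\cdot]=(a)\mathcal C'[\cdot]$; $\mathrm{auth}(\mathcal C'[\cdot],a)$ if $\mathcal C[\cdot]=(b)\mathcal C'[\cdot]$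 with $a\neq b$, or $\mathcal C[\cdot]=P\mid\mathcal C'[\cdot]$, or $\mathcal C[\cdot]=(\nu b)\mathcal C'[\cdot]$. The typing judgment $\rho\vdash P$ ($\rho$ a set of names) is the least relation closed under the rules: $\emptyset\vdash 0$; if $\rho_1\vdash P$ and $\rho_2\vdash Q$ then $\rho_1\cup\rho_2\vdash P\mid Q$; if $\rho\vdash P$ and $a\notin\rho$ then $\rho\vdash(\nu a)P$; if $\rho\vdash P$ then $\rho\setminus\{a\}\vdash(a)P$; if $\rho\vdash P$ then $\rho\cup\{a\}\vdash\overline{a}\langle b\rangle.P$; if $\rho\vdash P$ and $x\notin\rho$ then $\rho\cup\{a\}\vdash a(x).P$; if $\rho\vdash P$ and $b\notin\rho$ then $\rho\cup\{a,b\}\vdash\overline{a}\langle\!\langle b\rangle\!\rangle.P$; if $\rho\vdash P$ then $(\rho\setminus\{b\})\cup\{a\}\vdash a\langle\!\langle b\rangle\!\rangle.P$. *)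

theory Defs
  imports Main "HOL-Library.Countable"
begin

(* Names are elements of a type variable 'n (of class countable). Binders are
   represented by explicit names (no quotienting by alpha-equivalence). *)

datatype 'n prefix =
    Out 'n 'n
  | Inp 'n 'n        (* a(x), binding x *)
  | AuthOut 'n 'n
  | AuthInp 'n 'n

fun subj :: "'n prefix \<Rightarrow> 'n" where
  "subj (Out a b) = a"
| "subj (Inp a x) = a"
| "subj (AuthOut a b) = a"
| "subj (AuthInp a b) = a"

datatype 'n proc =
    Nil
  | Par "'n proc" "'n proc"
  | Res 'n "'n proc"
  | Auth 'n "'n proc"
  | Pre "'n prefix" "'n proc"

datatype 'n ctx =
    Hole
  | CPar "'n proc" "'n ctx"
  | CRes 'n "'n ctx"
  | CAuth 'n "'n ctx"

fun fill :: "'n ctx \<Rightarrow> 'n proc \<Rightarrow> 'n proc" where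
  "fill Hole R = R"
| "fill (CPar P C) R = Par P (fill C R)"
| "fill (CRes a C) R = Res a (fill C R)"
| "fill (CAuth a C) R = Auth a (fill C R)"

fun auth :: "'n ctx \<Rightarrow> 'n \<Rightarrow> bool" where
  "auth Hole a = False"
| "auth (CAuth b C) a = (if b = a then True else auth C a)"
| "auth (CPar P C) a = auth C a"
| "auth (CRes b C) a = auth C a"

inductive typed :: "'n set \<Rightarrow> 'n proc \<Rightarrow> bool" where
  t_nil: "typed {} Nil"
| t_par: "typed \<rho>1 P \<Longrightarrow> typed \<rho>2 Q \<Longrightarrow> typed (\<rho>1 \<union> \<rho>2) (Par P Q)"
| t_res: "typed \<rho> P \<Longrightarrow> a \<notin> \<rho> \<Longrightarrow> typed \<rho> (Res a P)"
| t_auth: "typed \<rho> P \<Longrightarrow> typed (\<rho> - {a}) (Auth a P)"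
| t_out: "typed \<rho> P \<Longrightarrow> typed (\<rho> \<union> {a}) (Pre (Out a b) P)"
| t_inp: "typed \<rho> P \<Longrightarrow> x \<notin> \<rho> \<Longrightarrow> typed (\<rho> \<union> {a}) (Pre (Inp a x) P)"
| t_aout: "typed \<rho> P \<Longrightarrow> b \<notin> \<rho> \<Longrightarrow> typed (\<rho> \<union> {a, b}) (Pre (AuthOut a b) P)"
| t_ainp: "typed \<rho> P \<Longrightarrow> typed ((\<rho> - {b}) \<union> {a}) (Pre (AuthInp a b) P)"

end

theory Submission
  imports Defs
begin

text \<open>Every typing rule for a prefix puts its subject into the type, and only the
  authorisation scope \<open>(a)P\<close> removes a name from it. Hence a subject that is typed at
  the hole but missing from the type of the whole process must have been removed by an
  enclosing scope \<open>(a)\<close> of the active context.\<close>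

inductive_cases typed_ParE: "typed \<rho> (Par P Q)"
inductive_cases typed_ResE: "typed \<rho> (Res a P)"
inductive_cases typed_AuthE: "typed \<rho> (Auth a P)"
inductive_cases typed_PreE: "typed \<rho> (Pre \<alpha> P)"

lemma subj_in_typed_Pre:
  assumes "typed \<rho> (Pre \<alpha> P)"
  shows "subj \<alpha> \<in> \<rho>"
  using assms by (cases \<alpha>) (auto elim: typed_PreE)

lemma typed_fill_unauth:
  assumes "typed \<rho> (fill C R)"
  shows "\<exists>\<rho>'. typed \<rho>' R \<and> (\<forall>a\<in>\<rho>'. \<not> auth C a \<longrightarrow> a \<in> \<rho>)"
  using assms
proof (induction C arbitrary: \<rho>)
  case Hole
  then show ?case by auto
next
  case (CPar P C)
  from CPar.prems obtain \<rho>1 \<rho>2 where "\<rho> = \<rho>1 \<union> \<rho>2" and "typed \<rho>2 (fill C R)"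
    by (auto elim: typed_ParE)
  with CPar.IH[of \<rho>2] show ?case by auto
next
  case (CRes b C)
  from CRes.prems have "typed \<rho> (fill C R)" by (auto elim: typed_ResE)
  with CRes.IH show ?case by simp
next
  case (CAuth b C)
  from CAuth.prems obtain \<rho>0 where "\<rho> = \<rho>0 - {b}" and "typed \<rho>0 (fill C R)"
    by (auto elim: typed_AuthE)
  with CAuth.IH[of \<rho>0] show ?case by auto
qed

theorem mainTheorem7:
  fixes \<rho> :: "('n::countable) set" and C :: "'n ctx" and a :: 'n
    and \<alpha> :: "'n prefix" and Q :: "'n proc"
  assumes "subj \<alpha> = a"
    and "typed \<rho> (fill C (Pre \<alpha> Q))"
    and "a \<notin> \<rho>"
  shows "auth C a"
proof -
  obtain \<rho>' where "typed \<rho>' (Pre \<alpha> Q)" and unauth: "\<forall>b\<in>\<rho>'. \<not> auth C b \<longrightarrow> b \<in> \<rho>"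
    using typed_fill_unauth[OF assms(2)] by blast
  then have "a \<in> \<rho>'" using subj_in_typed_Pre assms(1) by blast
  with unauth assms(3) show ?thesis by blast
qed

end
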